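(* Let $\mathcal{M}=\langle S,\to,L\rangle$ be a labeled transition system, let $B\subseteq S\times S$ be a skipping simulation on $\mathcal{M}$, and let $\kappa$ be a cardinal with $\omega\preceq\kappa$ and $|S|\preceq\kappa$. Then for all $s,w\in S$, $\mathit{size}(\mathit{ranktCt}(\mathcal{M},s,w))$ is an ordinal of cardinality at most $\kappa$.
   Context: A labeled transition system is $\mathcal{M}=\langle S,\to,L\rangle$ where $S$ is a non-empty set of states, $\to\subseteq S\times S$ is left-total, and $L$ is a function with domain $S$. A fullpath is an infinite sequence $\sigma$ with $\sigma(i)\to\sigma(i+1)$ for all $i$; it starts at $\sigma(0)$. $w\to^{+}v$ means there is a finite path $w=v_0\to\cdots\to v_k=v$ with $k\ge1$. Let $\mathit{INC}$ be the set of strictly increasing infinite sequences of naturals starting at $0$. For a fullpath $\sigma$ and $\pi\in\mathit{INC}$ the $i$-th segment of $\sigma$ is $\sigma(\pi(i)),\dots,\sigma(\pi(i+1)-1)$. $\mathit{match}(B,\sigma,\delta)$ holds iff there exist $\pi,\xi\in\mathit{INC}$ such that for every $i$ and every state $x$ in the $i$-th segment of $\sigma$ w.r.t. $\pi$, $xB\delta(\xi(i))$. $B$ is a skipping simulation (SKS) iff for all $s,w$ with $sBw$: $L(s)=L(w)$, and for every fullpath $\sigma$ starting at $s$ there is a fullpath $\delta$ starting at $w$ with $\mathit{match}(B,\sigma,\delta)$. The computation tree $\mathit{ctree}(\mathcal{M},s)$ has as nodes finite sequences over $S$; it is the smallest tree such that $\langle s\rangle$ is the root, and if $\langle s,\dots,x\rangle$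 is a node and $x\to y$ then $\langle s,\dots,x,y\rangle$ is a node whose parent is $\langle s,\dots,x\rangle$. For the SKS $B$: if not $sBw$, $\mathit{ranktCt}(\mathcal{M},s,w)$ is the empty tree; otherwise it is the largest subtree of $\mathit{ctree}(\mathcal{M},s)$ (containing the root) such that every non-root node $\langle s,\dots,x\rangle$ satisfies $xBw$ and, for all $v$ with $w\to^{+}v$, not $xBv$. (Every branch of this tree is finite.) For a tree $t$ all of whose branches are finite, ordinals are assigned to its nodes by $\mathit{size}(t,x)=\bigcup_{c\text{ a child of }x}\mathit{size}(t,c)+1$ (von Neumann ordinals; the union of the successors, so a leaf gets $0$... i.e. the supremum of $\mathit{size}(t,c)+1$ over children $c$), and $\mathit{size}(\mathit{ranktCt}(\mathcal{M},s,w))=\mathit{size}(\mathit{ranktCt}(\mathcal{M},s,w),\langle s\rangle)$. $\preceq$ compares ordinals and cardinals. *)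

theory Defs
  imports Main
begin

definition lts :: "'s set \<Rightarrow> ('s \<times> 's) set \<Rightarrow> bool" where
  "lts S R \<longleftrightarrow> S \<noteq> {} \<and> R \<subseteq> S \<times> S \<and> (\<forall>x\<in>S. \<exists>y. (x, y) \<in> R)"

definition fullpath :: "('s \<times> 's) set \<Rightarrow> (nat \<Rightarrow> 's) \<Rightarrow> bool" where
  "fullpath R \<sigma> \<longleftrightarrow> (\<forall>i. (\<sigma> i, \<sigma> (Suc i)) \<in> R)"

definition INC :: "(nat \<Rightarrow> nat) set" where
  "INC = {\<pi>. strict_mono \<pi> \<and> \<pi> 0 = 0}"

definition match :: "('s \<times> 's) set \<Rightarrow> (nat \<Rightarrow> 's) \<Rightarrow> (nat \<Rightarrow> 's) \<Rightarrow> bool" where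
  "match B \<sigma> \<delta> \<longleftrightarrow> (\<exists>\<pi>\<in>INC. \<exists>\<xi>\<in>INC. \<forall>i k. \<pi> i \<le> k \<and> k < \<pi> (Suc i) \<longrightarrow> (\<sigma> k, \<delta> (\<xi> i)) \<in> B)"

definition SKS :: "('s \<times> 's) set \<Rightarrow> ('s \<Rightarrow> 'l) \<Rightarrow> ('s \<times> 's) set \<Rightarrow> bool" where
  "SKS R L B \<longleftrightarrow> (\<forall>s w. (s, w) \<in> B \<longrightarrow> L s = L w \<and>
     (\<forall>\<sigma>. fullpath R \<sigma> \<and> \<sigma> 0 = s \<longrightarrow> (\<exists>\<delta>. fullpath R \<delta> \<and> \<delta> 0 = w \<and> match B \<sigma> \<delta>)))"

text \<open>Computation tree: nodes are finite sequences (lists); smallest set containing the root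
  and closed under extension by a transition. The parent of \<open>xs @ [y]\<close> is \<open>xs\<close>.\<close>
inductive_set ctree :: "('s \<times> 's) set \<Rightarrow> 's \<Rightarrow> 's list set" for R s where
  root: "[s] \<in> ctree R s"
| step: "xs \<in> ctree R s \<Longrightarrow> (last xs, y) \<in> R \<Longrightarrow> xs @ [y] \<in> ctree R s"

definition ranktCt :: "('s \<times> 's) set \<Rightarrow> ('s \<times> 's) set \<Rightarrow> 's \<Rightarrow> 's \<Rightarrow> 's list set" where
  "ranktCt R B s w =
    (if (s, w) \<notin> B then {}
     else \<Union>{T. T \<subseteq> ctree R s \<and> [s] \<in> T
               \<and> (\<forall>xs\<in>T. length xs \<ge> 2 \<longrightarrow> butlast xs \<in> T)
               \<and> (\<forall>xs\<in>T. length xs \<ge> 2 \<longrightarrow>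
                     (last xs, w) \<in> B \<and> (\<forall>v. (w, v) \<in> R\<^sup>+ \<longrightarrow> (last xs, v) \<notin> B))})"

definition children :: "'s list set \<Rightarrow> 's list \<Rightarrow> 's list set" where
  "children t x = {c \<in> t. \<exists>y. c = x @ [y]}"

text \<open>Ordinals are represented by well-order relations (compared by \<open>ordLeq\<close>/\<open>ordLess\<close>).
  \<open>size_assignment t f\<close>: f assigns to every node x of t the ordinal size(t,x), i.e. the
  least ordinal strictly above all size(t,c) for children c (= sup of size(t,c)+1).
  Leastness is taken among well-orders on the same carrier type.\<close>
definition size_assignment :: "'s list set \<Rightarrow> ('s list \<Rightarrow> 'o rel) \<Rightarrow> bool" where
  "size_assignment t f \<longleftrightarrow> (\<forall>x\<in>t. Well_order (f x)
      \<and> (\<forall>c\<in>children t x. (f c, f x) \<in> ordLess)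
      \<and> (\<forall>r :: 'o rel. Well_order r \<and> (\<forall>c\<in>children t x. (f c, r) \<in> ordLess) \<longrightarrow> (f x, r) \<in> ordLeq))"

end

theory Submission
  imports Defs
begin

text \<open>Along a branch of ranktCt the last state stays related to w but never to a proper
  successor of w.  Such a branch cannot be infinite: the skipping simulation matches it with a
  fullpath from w and relates its second segment to a state reached from w in at least one step.
  So ranktCt is well-founded and the ranks (least well-orders strictly above the children's ranks)
  exist; for this one needs a well-order strictly above any \<open>\<le> |UNIV|\<close> many well-orders on an
  infinite type, which regularity of the successor cardinal provides.  A rank is covered by the
  initial segments below its children's ranks; by induction each has cardinality at most \<open>\<kappa>\<close>,
  and there are at most \<open>|S| \<le> \<kappa>\<close> children, so for infinite \<open>\<kappa>\<close> the rank has cardinality at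
  most \<open>\<kappa>\<close>.\<close>

unbundle cardinal_syntax

definition least_strict_upper_bound :: "'a rel set \<Rightarrow> 'a rel \<Rightarrow> bool" where
  "least_strict_upper_bound Q r \<longleftrightarrow> Well_order r \<and> (\<forall>q\<in>Q. q <o r)
     \<and> (\<forall>r' :: 'a rel. Well_order r' \<and> (\<forall>q\<in>Q. q <o r') \<longrightarrow> r \<le>o r')"

lemma size_assignment_iff_least_strict_upper_bound:
  "size_assignment t f \<longleftrightarrow> (\<forall>x\<in>t. least_strict_upper_bound (f ` children t x) (f x))"
  unfolding size_assignment_def least_strict_upper_bound_def by auto

lemma card_of_under_ordLeq_infinite_Field:
  assumes "Well_order r" and "a \<in> Field r" and "|underS r a| \<le>o k"
    and "Card_order k" and "infinite (Field k)"
  shows "|under r a| \<le>o k"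
proof -
  have "under r a = {a} \<union> underS r a"
    using assms(1,2) unfolding under_def underS_def order_on_defs refl_on_def by auto
  moreover have "|{a}| \<le>o k" using Card_order_singl_ordLeq assms(4,5) by fastforce
  ultimately show ?thesis using card_of_Un_ordLeq_infinite_Field assms(3-5) by metis
qed

lemma ordLess_cardSuc_card_of_UNIV:
  fixes q :: "'a rel"
  assumes "Well_order q"
  shows "q <o cardSuc |UNIV :: 'a set|"
proof (rule ccontr)
  let ?W = "cardSuc |UNIV :: 'a set|"
  have cW: "Card_order ?W" using cardSuc_Card_order card_of_Card_order by blast
  assume "\<not> q <o ?W"
  hence "?W \<le>o q" using ordLess_or_ordLeq assms cW card_order_on_well_order_on by blast
  hence "|Field ?W| \<le>o |Field q|" by (rule card_of_mono2)
  moreover have "|Field q| \<le>o |UNIV :: 'a set|" by (simp add: card_of_mono1)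
  moreover have "?W =o |Field ?W|" using card_of_Field_ordIso[OF cW] ordIso_symmetric by blast
  ultimately have "?W \<le>o |UNIV :: 'a set|" using ordIso_ordLeq_trans ordLeq_transitive by blast
  thus False using cardSuc_greater card_of_Card_order not_ordLess_ordLeq by blast
qed

lemma exists_ordIso_Well_order_on_UNIV:
  fixes r :: "'b rel"
  assumes "Well_order r" and "|Field r| \<le>o |UNIV :: 'a set|"
  shows "\<exists>r' :: 'a rel. Well_order r' \<and> r =o r'"
proof -
  obtain h :: "'b \<Rightarrow> 'a" where "inj_on h (Field r)"
    using assms(2) card_of_ordLeq[of "Field r" "UNIV :: 'a set"] by auto
  thus ?thesis using dir_image_ordIso Well_order_dir_image assms(1) by blast
qed

lemma cardSuc_small_subset_under:
  assumes "Card_order r" and "infinite (Field r)"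
    and "A \<subseteq> Field (cardSuc r)" and "|A| \<le>o r"
  shows "\<exists>b \<in> Field (cardSuc r). A \<subseteq> under (cardSuc r) b"
proof -
  have "Well_order (cardSuc r)" using assms(1) by (rule cardSuc_Well_order)
  hence tr: "trans (cardSuc r)" and rf: "Refl (cardSuc r)" unfolding order_on_defs by auto
  have "relChain (cardSuc r) (under (cardSuc r))"
    using tr unfolding relChain_def under_def trans_def by blast
  moreover have "A \<subseteq> (\<Union>i \<in> Field (cardSuc r). under (cardSuc r) i)"
    using assms(3) rf Refl_under_in by fastforce
  ultimately show ?thesis using cardSuc_UNION[OF assms(1,2)] assms(4) by blast
qed

lemma exists_strict_upper_bound:
  fixes Q :: "'a rel set"
  assumes "infinite (UNIV :: 'a set)" and "\<forall>q\<in>Q. Well_order q" and "|Q| \<le>o |UNIV :: 'a set|"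
  shows "\<exists>r :: 'a rel. Well_order r \<and> (\<forall>q\<in>Q. q <o r)"
proof -
  let ?U = "|UNIV :: 'a set|"
  let ?W = "cardSuc ?U"
  have cU: "Card_order ?U" and cW: "Card_order ?W" and wW: "Well_order ?W"
    by (simp_all add: cardSuc_Card_order cardSuc_Well_order card_of_Card_order)
  have trW: "trans ?W" using wW unfolding order_on_defs by auto
  have "\<forall>q\<in>Q. \<exists>a \<in> Field ?W. q =o Restr ?W (underS ?W a)"
    using ordLess_iff_ordIso_Restr[OF wW] ordLess_cardSuc_card_of_UNIV assms(2) by blast
  then obtain a where a: "\<And>q. q \<in> Q \<Longrightarrow> a q \<in> Field ?W \<and> q =o Restr ?W (underS ?W (a q))"
    by metis
  have "infinite (Field ?U)" using assms(1) by (simp add: Field_card_of)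
  moreover have "a ` Q \<subseteq> Field ?W" using a by auto
  moreover have "|a ` Q| \<le>o ?U" using card_of_image assms(3) ordLeq_transitive by blast
  ultimately have "\<exists>b \<in> Field ?W. a ` Q \<subseteq> under ?W b" by (rule cardSuc_small_subset_under[OF cU])
  then obtain b where b: "b \<in> Field ?W" "a ` Q \<subseteq> under ?W b" by blast
  let ?R = "Restr ?W (under ?W b)"
  have ofb: "wo_rel.ofilter ?W (under ?W b)" using wW by (simp add: wo_rel_def wo_rel.under_ofilter)
  have lt: "q <o ?R" if "q \<in> Q" for q
  proof -
    have ofa: "wo_rel.ofilter ?W (underS ?W (a q))" using wW by (simp add: wo_rel_def wo_rel.underS_ofilter)
    have "a q \<in> under ?W b" using b that by blast
    hence "underS ?W (a q) \<subset> under ?W b"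
      using trW unfolding under_def underS_def trans_def by blast
    hence "Restr ?W (underS ?W (a q)) <o ?R" using ofilter_subset_ordLess[OF wW ofa ofb] by blast
    thus ?thesis using a[OF that] ordIso_ordLess_trans by blast
  qed
  have "|underS ?W b| \<le>o ?U"
    using card_of_underS[OF cW b(1)] cardSuc_ordLeq_ordLess[OF cU card_of_Card_order] by blast
  hence "|Field ?R| \<le>o ?U"
    using card_of_under_ordLeq_infinite_Field[OF wW b(1) _ cU] assms(1)
      Field_Restr_ofilter[OF wW ofb] by (simp add: Field_card_of)
  then obtain r :: "'a rel" where "Well_order r" "?R =o r"
    using exists_ordIso_Well_order_on_UNIV Well_order_Restr[OF wW] by blast
  thus ?thesis using lt ordLess_ordIso_trans by blast
qed

lemma exists_least_strict_upper_bound: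
  fixes Q :: "'a rel set"
  assumes "infinite (UNIV :: 'a set)" and "\<forall>q\<in>Q. Well_order q" and "|Q| \<le>o |UNIV :: 'a set|"
  shows "\<exists>r. least_strict_upper_bound Q r"
proof -
  let ?B = "{r :: 'a rel. Well_order r \<and> (\<forall>q\<in>Q. q <o r)}"
  have "?B \<noteq> {}" using exists_strict_upper_bound[OF assms] by blast
  then obtain r where "r \<in> ?B" "\<forall>r'\<in>?B. r \<le>o r'" using exists_minim_Well_order[of ?B] by blast
  thus ?thesis unfolding least_strict_upper_bound_def by blast
qed

lemma least_strict_upper_bound_Field_cover:
  fixes r :: "'a rel"
  assumes "least_strict_upper_bound Q r"
  obtains b where "\<forall>q\<in>Q. b q \<in> Field r \<and> q =o Restr r (underS r (b q))"
    and "Field r \<subseteq> (\<Union>q\<in>Q. under r (b q))"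
proof -
  have wr: "Well_order r" and lt: "\<forall>q\<in>Q. q <o r"
    and least: "\<And>r' :: 'a rel. Well_order r' \<Longrightarrow> \<forall>q\<in>Q. q <o r' \<Longrightarrow> r \<le>o r'"
    using assms unfolding least_strict_upper_bound_def by auto
  have wq: "Well_order q" if "q \<in> Q" for q using lt that unfolding ordLess_def by blast
  have "\<forall>q\<in>Q. \<exists>a \<in> Field r. q =o Restr r (underS r a)"
    using ordLess_iff_ordIso_Restr[OF wr wq] lt by blast
  then obtain b where b: "\<forall>q\<in>Q. b q \<in> Field r \<and> q =o Restr r (underS r (b q))"
    by metis
  have "a \<in> (\<Union>q\<in>Q. under r (b q))" if a: "a \<in> Field r" for a
  proof -
    let ?A = "Restr r (underS r a)"
    have ofa: "wo_rel.ofilter r (underS r a)" using wr by (simp add: wo_rel_def wo_rel.underS_ofilter)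
    \<comment> \<open>The initial segment below \<open>a\<close> is too short to be a strict upper bound of \<open>Q\<close>.\<close>
    have "?A <o r" using underS_Restr_ordLess[OF wr] a by blast
    hence "\<not> (\<forall>q\<in>Q. q <o ?A)" using least[OF Well_order_Restr[OF wr]] not_ordLess_ordLeq by blast
    then obtain q where q: "q \<in> Q" "\<not> q <o ?A" by blast
    have bq: "b q \<in> Field r" "q =o Restr r (underS r (b q))" using b q(1) by auto
    have "?A \<le>o q" using ordLess_or_ordLeq[OF wq[OF q(1)] Well_order_Restr[OF wr]] q(2) by blast
    hence "?A \<le>o Restr r (underS r (b q))" using bq(2) by (rule ordLeq_ordIso_trans)
    moreover have "wo_rel.ofilter r (underS r (b q))" using wr by (simp add: wo_rel_def wo_rel.underS_ofilter)
    ultimately have "underS r a \<subseteq> underS r (b q)" using ofilter_subset_ordLeq[OF wr ofa] by blast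
    moreover have "Linear_order r" using wr by (simp add: well_order_on_def)
    ultimately have "(a, b q) \<in> r" using underS_incl_iff[of r a "b q"] a bq(1) by simp
    thus ?thesis using q(1) unfolding under_def by blast
  qed
  thus thesis by (intro that[OF b]) blast
qed

lemma card_of_Field_least_strict_upper_bound:
  assumes "least_strict_upper_bound Q r" and "Card_order k" and "infinite (Field k)"
    and "|Q| \<le>o k" and "\<forall>q\<in>Q. |Field q| \<le>o k"
  shows "|Field r| \<le>o k"
proof -
  have wr: "Well_order r" using assms(1) unfolding least_strict_upper_bound_def by blast
  obtain b where b: "\<forall>q\<in>Q. b q \<in> Field r \<and> q =o Restr r (underS r (b q))"
    and cover: "Field r \<subseteq> (\<Union>q\<in>Q. under r (b q))"
    by (rule least_strict_upper_bound_Field_cover[OF assms(1)])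
  have "|under r (b q)| \<le>o k" if q: "q \<in> Q" for q
  proof -
    have "wo_rel.ofilter r (underS r (b q))" using wr by (simp add: wo_rel_def wo_rel.underS_ofilter)
    hence "Field (Restr r (underS r (b q))) = underS r (b q)" using Field_Restr_ofilter[OF wr] by blast
    moreover have "Restr r (underS r (b q)) \<le>o q" using b q ordIso_iff_ordLeq by blast
    ultimately have "|underS r (b q)| \<le>o |Field q|" using card_of_mono2 by fastforce
    hence "|underS r (b q)| \<le>o k" using assms(5) q ordLeq_transitive by blast
    thus ?thesis using card_of_under_ordLeq_infinite_Field[OF wr _ _ assms(2,3)] b q by blast
  qed
  hence "|\<Union>q\<in>Q. under r (b q)| \<le>o k"
    by (intro card_of_UNION_ordLeq_infinite_Field[OF assms(3,2,4)]) blast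
  thus ?thesis using card_of_mono1[OF cover] ordLeq_transitive by blast
qed

lemma exists_least_strict_upper_bound_rank:
  fixes t :: "'n set" and ch :: "'n \<Rightarrow> 'n set"
  assumes wf: "wf {(c, x). x \<in> t \<and> c \<in> ch x}" and "\<forall>x\<in>t. ch x \<subseteq> t"
    and "\<forall>x\<in>t. |ch x| \<le>o |UNIV :: 'a set|" and "infinite (UNIV :: 'a set)"
  shows "\<exists>f :: 'n \<Rightarrow> 'a rel. \<forall>x\<in>t. least_strict_upper_bound (f ` ch x) (f x)"
proof -
  define lsub :: "'a rel set \<Rightarrow> 'a rel" where "lsub Q = (SOME r. least_strict_upper_bound Q r)" for Q
  define f where "f = wfrec {(c, x). x \<in> t \<and> c \<in> ch x} (\<lambda>\<phi> x. lsub (\<phi> ` ch x))"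
  have f_eq: "f x = lsub (f ` ch x)" if "x \<in> t" for x
    unfolding f_def by (subst wfrec[OF wf]) (use that in \<open>auto simp: cut_apply intro!: arg_cong[where f = lsub]\<close>)
  have "x \<in> t \<longrightarrow> least_strict_upper_bound (f ` ch x) (f x)" for x
  proof (induction x rule: wf_induct_rule[OF wf])
    case (1 x)
    show ?case
    proof
      assume x: "x \<in> t"
      have "\<forall>q\<in>f ` ch x. Well_order q"
        using 1 x assms(2) unfolding least_strict_upper_bound_def by auto
      moreover have "|f ` ch x| \<le>o |UNIV :: 'a set|"
        using card_of_image assms(3) x ordLeq_transitive by blast
      ultimately have "least_strict_upper_bound (f ` ch x) (lsub (f ` ch x))"
        unfolding lsub_def by (rule someI_ex[OF exists_least_strict_upper_bound[OF assms(4)]])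
      thus "least_strict_upper_bound (f ` ch x) (f x)" using f_eq[OF x] by simp
    qed
  qed
  thus ?thesis by blast
qed

lemma card_of_Field_rank_ordLeq:
  fixes f :: "'n \<Rightarrow> 'o rel" and k :: "'k rel"
  assumes "\<forall>x\<in>t. least_strict_upper_bound (f ` ch x) (f x)" and "\<forall>x\<in>t. ch x \<subseteq> t"
    and "Card_order k" and "infinite (Field k)" and "\<forall>x\<in>t. |ch x| \<le>o k"
  shows "\<forall>x\<in>t. |Field (f x)| \<le>o k"
proof -
  have "x \<in> t \<longrightarrow> |Field (f x)| \<le>o k" for x
  proof (induction x rule: wf_induct_rule[OF wf_inv_image[OF wf_ordLess, of f]])
    case (1 x)
    show ?case
    proof
      assume x: "x \<in> t"
      have "|Field (f c)| \<le>o k" if c: "c \<in> ch x" for c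
      proof -
        have "f c <o f x" using assms(1) x c unfolding least_strict_upper_bound_def by blast
        thus ?thesis using 1[of c] c x assms(2) by (auto simp: in_inv_image)
      qed
      hence "\<forall>q\<in>f ` ch x. |Field q| \<le>o k" by blast
      moreover have "|f ` ch x| \<le>o k" using card_of_image assms(5) x ordLeq_transitive by blast
      ultimately show "|Field (f x)| \<le>o k"
        using card_of_Field_least_strict_upper_bound assms(1,3,4) x by blast
    qed
  qed
  thus ?thesis by blast
qed

lemma ctree_nonempty: "xs \<in> ctree R s \<Longrightarrow> xs \<noteq> []"
  by (induction rule: ctree.induct) auto

lemma ctree_singletonD: "[x] \<in> ctree R s \<Longrightarrow> x = s"
  by (cases rule: ctree.cases) (auto dest: ctree_nonempty)

lemma ctree_snocD:
  assumes "xs @ [y] \<in> ctree R s" and "xs \<noteq> []"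
  shows "(last xs, y) \<in> R"
  using assms by (cases rule: ctree.cases) auto

lemma ranktCt_memD:
  assumes "xs \<in> ranktCt R B s w"
  shows "(s, w) \<in> B" and "xs \<in> ctree R s"
    and "2 \<le> length xs \<Longrightarrow> (last xs, w) \<in> B \<and> (\<forall>v. (w, v) \<in> R\<^sup>+ \<longrightarrow> (last xs, v) \<notin> B)"
  using assms unfolding ranktCt_def by (auto split: if_splits)

lemma fullpath_trancl: "fullpath R \<delta> \<Longrightarrow> (\<delta> 0, \<delta> (Suc n)) \<in> R\<^sup>+"
  by (induction n) (auto simp: fullpath_def intro: trancl_into_trancl)

lemma SKS_fullpath_matched_beyond:
  assumes "SKS R L B" and "fullpath R \<sigma>" and "(\<sigma> 0, w) \<in> B"
  shows "\<exists>i>0. \<exists>v. (w, v) \<in> R\<^sup>+ \<and> (\<sigma> i, v) \<in> B"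
proof -
  obtain \<delta> where \<delta>: "fullpath R \<delta>" "\<delta> 0 = w" "match B \<sigma> \<delta>"
    using assms unfolding SKS_def by blast
  then obtain \<pi> \<xi> where "\<pi> \<in> INC" "\<xi> \<in> INC"
    and m: "\<forall>i k. \<pi> i \<le> k \<and> k < \<pi> (Suc i) \<longrightarrow> (\<sigma> k, \<delta> (\<xi> i)) \<in> B"
    unfolding match_def by blast
  hence mono: "strict_mono \<pi>" "strict_mono \<xi>" and "\<pi> 0 = 0" "\<xi> 0 = 0" unfolding INC_def by auto
  hence \<pi>: "0 < \<pi> 1" "\<pi> 1 < \<pi> 2" and "0 < \<xi> 1"
    using strict_mono_less[OF mono(1), of 0 1] strict_mono_less[OF mono(1), of 1 2]
      strict_mono_less[OF mono(2), of 0 1] by simp_all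
  then obtain j where j: "\<xi> 1 = Suc j" using gr0_implies_Suc by blast
  \<comment> \<open>The second segment of \<open>\<sigma>\<close> is matched by \<open>\<delta> (\<xi> 1)\<close>, a proper successor of \<open>w\<close>.\<close>
  have "(\<sigma> (\<pi> 1), \<delta> (\<xi> 1)) \<in> B" using m \<pi> by (simp add: numeral_2_eq_2)
  moreover have "(w, \<delta> (\<xi> 1)) \<in> R\<^sup>+" using fullpath_trancl[OF \<delta>(1)] \<delta>(2) j by simp
  ultimately show ?thesis using \<pi> by blast
qed

lemma wf_ranktCt_children:
  assumes "SKS R L B"
  shows "wf {(c, x). x \<in> ranktCt R B s w \<and> c \<in> children (ranktCt R B s w) x}"
  unfolding wf_iff_no_infinite_down_chain
proof (intro notI, elim exE)
  let ?t = "ranktCt R B s w"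
  fix g assume "\<forall>i. (g (Suc i), g i) \<in> {(c, x). x \<in> ?t \<and> c \<in> children ?t x}"
  hence g: "\<And>i. g i \<in> ?t" and "\<And>i. \<exists>y. g (Suc i) = g i @ [y]"
    unfolding children_def by auto
  then obtain y where y: "\<And>i. g (Suc i) = g i @ [y i]" by metis
  have ne: "g i \<noteq> []" for i by (rule ctree_nonempty[OF ranktCt_memD(2)[OF g]])
  have long: "2 \<le> length (g i)" if "i > 0" for i
  proof -
    obtain j where "i = Suc j" using \<open>i > 0\<close> gr0_implies_Suc by blast
    thus ?thesis using y[of j] ne[of j] by (cases "g j") auto
  qed
  define \<sigma> where "\<sigma> i = last (g i)" for i
  have "(\<sigma> i, \<sigma> (Suc i)) \<in> R" for i
    using ctree_snocD[OF _ ne] ranktCt_memD(2)[OF g, of "Suc i"] unfolding \<sigma>_def y by simp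
  hence "fullpath R \<sigma>" unfolding fullpath_def by blast
  moreover have "(\<sigma> 0, w) \<in> B"
  proof (cases "2 \<le> length (g 0)")
    case True
    thus ?thesis using ranktCt_memD(3)[OF g] unfolding \<sigma>_def by blast
  next
    case False
    then obtain x where x: "g 0 = [x]" using ne[of 0] by (cases "g 0") (auto simp: Suc_le_eq)
    hence "x = s" using ctree_singletonD ranktCt_memD(2)[OF g, of 0] by simp
    thus ?thesis using ranktCt_memD(1)[OF g] x unfolding \<sigma>_def by simp
  qed
  ultimately obtain i v where "i > 0" "(w, v) \<in> R\<^sup>+" "(\<sigma> i, v) \<in> B"
    using SKS_fullpath_matched_beyond[OF assms] by blast
  thus False using ranktCt_memD(3)[OF g long] unfolding \<sigma>_def by blast
qed

lemma card_of_children_ranktCt: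
  assumes "lts S R" and "x \<in> ranktCt R B s w"
  shows "|children (ranktCt R B s w) x| \<le>o |S|"
proof -
  have ne: "x \<noteq> []" by (rule ctree_nonempty[OF ranktCt_memD(2)[OF assms(2)]])
  have "children (ranktCt R B s w) x \<subseteq> (\<lambda>y. x @ [y]) ` S"
  proof
    fix c assume "c \<in> children (ranktCt R B s w) x"
    then obtain y where c: "c = x @ [y]" "c \<in> ranktCt R B s w" unfolding children_def by auto
    hence "(last x, y) \<in> R" using ctree_snocD[OF _ ne] ranktCt_memD(2)[OF c(2)] by simp
    hence "y \<in> S" using assms(1) unfolding lts_def by auto
    thus "c \<in> (\<lambda>y. x @ [y]) ` S" using c(1) by blast
  qed
  thus ?thesis using card_of_mono1 card_of_image ordLeq_transitive by blast
qed

theorem lemma2: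
  fixes S :: "'s set" and R :: "('s \<times> 's) set" and L :: "'s \<Rightarrow> 'l"
    and B :: "('s \<times> 's) set" and k :: "'k rel"
  assumes "lts S R"
    and "B \<subseteq> S \<times> S" and "SKS R L B"
    and "Card_order k" and "(natLeq, k) \<in> ordLeq" and "(card_of S, k) \<in> ordLeq"
    and "s \<in> S" and "w \<in> S"
  shows "(\<exists>f :: 's list \<Rightarrow> 's list rel. size_assignment (ranktCt R B s w) f)
       \<and> (\<forall>f :: 's list \<Rightarrow> 'o rel. size_assignment (ranktCt R B s w) f \<longrightarrow> [s] \<in> ranktCt R B s w
            \<longrightarrow> (card_of (Field (f [s])), k) \<in> ordLeq)"
proof (intro conjI allI impI)
  let ?t = "ranktCt R B s w"
  have wf: "wf {(c, x). x \<in> ?t \<and> c \<in> children ?t x}" by (rule wf_ranktCt_children[OF assms(3)])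
  have sub: "\<forall>x\<in>?t. children ?t x \<subseteq> ?t" unfolding children_def by blast
  have "\<forall>x\<in>?t. |children ?t x| \<le>o |UNIV :: 's list set|" by (simp add: card_of_mono1)
  from exists_least_strict_upper_bound_rank[OF wf sub this infinite_UNIV_listI]
  show "\<exists>f :: 's list \<Rightarrow> 's list rel. size_assignment ?t f"
    unfolding size_assignment_iff_least_strict_upper_bound .
  fix f :: "'s list \<Rightarrow> 'o rel"
  assume "size_assignment ?t f" and "[s] \<in> ?t"
  hence sa: "\<forall>x\<in>?t. least_strict_upper_bound (f ` children ?t x) (f x)"
    unfolding size_assignment_iff_least_strict_upper_bound by blast
  have "natLeq \<le>o |Field k|"
    using assms(5) card_of_Field_ordIso[OF assms(4)] ordIso_symmetric ordLeq_ordIso_trans by blast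
  hence infinite: "infinite (Field k)" using infinite_iff_natLeq_ordLeq by blast
  have "\<forall>x\<in>?t. |children ?t x| \<le>o k"
    using card_of_children_ranktCt[OF assms(1)] assms(6) ordLeq_transitive by blast
  with card_of_Field_rank_ordLeq[OF sa sub assms(4) infinite]
  have "\<forall>x\<in>?t. |Field (f x)| \<le>o k" .
  thus "|Field (f [s])| \<le>o k" using \<open>[s] \<in> ?t\<close> by blast
qed

end
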